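(* In the mini-batch setting below, fix $t\ge1$. Let $\check q_{J_t}$ be the $L_2$-orthogonal projection of $q_\tau$ onto $\mathcal{G}_t$, let $h_t=\widehat q_{t-1}-\check q_{J_t}$, and let $s_{t,1}=\tau-\mathbb{I}(Y_{t,1}\le\widehat q_{t-1}(\mathbf{X}_{t,1}))$. Define $$II := 2\gamma_t\,\mathbb{E}\Big[\big\langle \widehat q_{t-1}-q_\tau,\; s_{t,1}K_t(\mathbf{X}_{t,1},\cdot)\big\rangle_{L_2}\Big].$$ Then $$II\le -\gamma_t\,c_1C_1\,\mathbb{E}\|h_t\|_{L_2}^2+\gamma_t\frac{c_2^2C_2^2}{c_1C_1}\|q_\tau-\check q_{J_t}\|_{L_2}^2.$$
   Context: Setting: batches $\{(\mathbf{X}_{t,i},Y_{t,i})\}_{i=1}^{n_t}$, $t=1,2,\dots$, with all observations i.i.d. copies of $(\mathbf{X},Y)\in[0,1]^p\times\mathbb{R}$; $\tau\in(0,1)$; $q_\tau$ is the conditional $\tau$-quantile of $Y$ given $\mathbf{X}$. For each $k$, $\{\psi_{kj}\}_{j\ge1}$ is a centered ($\int_0^1\psi_{kj}=0$) orthonormal system in $L_2[0,1]$ with $\sup_{k,j}\|\psi_{kj}\|_\infty\le M$, $M\ge1$. $q_\tau(\mathbf{x})=\alpha^*+\sum_{k=1}^p\sum_{j\ge1}\theta^*_{kj}\psi_{kj}(x^{(k)})$ with $|\alpha^*|+\sum_{k,j}|\theta^*_{kj}|\le R$; $B:=MR$. (A1): $\mathbf{X}$ has density $p_X$ with $C_1\le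 p_X\le C_2$ on $[0,1]^p$, $C_1>0$. (A2): the conditional density satisfies $c_1\le p_{Y|\mathbf{X}}(y|\mathbf{x})\le c_2$ for all $\mathbf{x}\in[0,1]^p$, $y\in[-B,B]$, $c_1>0$. $\boldsymbol\Psi_t(\mathbf{x})=(1,\psi_{11}(x^{(1)}),\dots,\psi_{pJ_t}(x^{(p)}))^\top\in\mathbb{R}^{1+pJ_t}$; $\mathcal{G}_t$ is the linear span of its components in $L_2([0,1]^p)$ (Lebesgue measure); $K_t(\mathbf{u},\mathbf{v})=\boldsymbol\Psi_t(\mathbf{u})^\top\boldsymbol\Psi_t(\mathbf{v})$. The quantity $\boldsymbol\theta_{t-1}$ is any random vector, measurable with respect to the data up to time $t-1$, with $\|\boldsymbol\theta_{t-1}\|_1\le R$ (padded with zeros to length $1+pJ_t$), e.g. the iterate of the mini-batch P-FGD algorithm with $\ell_1$-ball projection of radius $R$; $\widehat q_{t-1}(\mathbf{x})=\boldsymbol\theta_{t-1}^\top\boldsymbol\Psi_t(\mathbf{x})$. $\gamma_t>0$ is deterministic. *)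

theory Defs
  imports "HOL-Probability.Probability"
begin

definition unit_cube :: "(real^'p) set" where
  "unit_cube = {x. \<forall>k. 0 \<le> x$k \<and> x$k \<le> 1}"

definition L2_inner :: "(real^'p \<Rightarrow> real) \<Rightarrow> (real^'p \<Rightarrow> real) \<Rightarrow> real" where
  "L2_inner f g = (LINT x:unit_cube|lborel. f x * g x)"

text \<open>The function a + sum_k sum_{j<J} c k j psi_kj(x^(k)), i.e. the vector (a,c) dotted
  with Psi_t(x) (the basis index j is 0-based: j < J stands for j = 1..J).\<close>
definition trunc_fun :: "('p \<Rightarrow> nat \<Rightarrow> real \<Rightarrow> real) \<Rightarrow> nat \<Rightarrow> real \<Rightarrow> ('p \<Rightarrow> nat \<Rightarrow> real)
    \<Rightarrow> real^'p \<Rightarrow> real" where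
  "trunc_fun psi J a c x = a + (\<Sum>k\<in>UNIV. \<Sum>j<J. c k j * psi k j (x$k))"

definition basis_span :: "('p \<Rightarrow> nat \<Rightarrow> real \<Rightarrow> real) \<Rightarrow> nat \<Rightarrow> (real^'p \<Rightarrow> real) set" where
  "basis_span psi J = {g. \<exists>a c. g = trunc_fun psi J a c}"

text \<open>K_t(u,v) = Psi_t(u)^T Psi_t(v).\<close>
definition kernel_t :: "('p \<Rightarrow> nat \<Rightarrow> real \<Rightarrow> real) \<Rightarrow> nat \<Rightarrow> real^'p \<Rightarrow> real^'p \<Rightarrow> real" where
  "kernel_t psi J u v = 1 + (\<Sum>k\<in>UNIV. \<Sum>j<J. psi k j (u$k) * psi k j (v$k))"

definition is_L2_proj :: "('p \<Rightarrow> nat \<Rightarrow> real \<Rightarrow> real) \<Rightarrow> nat \<Rightarrow> (real^'p \<Rightarrow> real)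
    \<Rightarrow> (real^'p \<Rightarrow> real) \<Rightarrow> bool" where
  "is_L2_proj psi J q qc \<longleftrightarrow> qc \<in> basis_span psi J \<and>
     (\<forall>g\<in>basis_span psi J. L2_inner (\<lambda>x. q x - qc x) g = 0)"

end

theory Submission
  imports Defs
begin

(* By the reproducing property of K_t on G_t and the orthogonality of q_tau - checkq to G_t,
   the inner product inside II equals s_{t,1} h_t(X_{t,1}).  The iterate depends only on past
   batches, which are independent of (X_{t,1}, Y_{t,1}); so one may integrate over the new
   observation first, with the iterate frozen.  Writing F_x for the conditional distribution
   function, this gives the integral over the cube of p_X h_t (tau - F_x(qhat)), and since
   tau = F_x(q_tau) and both qhat and q_tau lie in [-B, B], the density bounds give
   tau - F_x(qhat) = -w (qhat - q_tau) with c1 <= w <= c2.  With W = p_X w in [c1 C1, c2 C2],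
   h = h_t(x) and e = q_tau(x) - checkq(x), Young's inequality yields
   -2 W h (h - e) <= -c1 C1 h^2 + (c2 C2)^2 / (c1 C1) e^2 pointwise; integrate over the cube. *)

section \<open>Integration over the unit cube\<close>

lemma Basis_vec_eq_range_axis: "(Basis :: (real^'n) set) = range (\<lambda>i. axis i 1)"
  by (auto simp: Basis_vec_def)

lemma inj_axis_1: "inj (\<lambda>i::'n::finite. axis i (1::real))"
  by (auto simp: inj_def axis_eq_axis)

lemma integral_lborel_prod_Basis:
  fixes f :: "'a::euclidean_space \<Rightarrow> real \<Rightarrow> real"
  assumes int: "\<And>b. b \<in> Basis \<Longrightarrow> integrable lborel (f b)"
  shows "(\<integral>x. (\<Prod>b\<in>Basis. f b (x \<bullet> b)) \<partial>lborel) = (\<Prod>b\<in>Basis. \<integral>u. f b u \<partial>lborel)"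
proof -
  have [measurable]: "b \<in> Basis \<Longrightarrow> f b \<in> borel_measurable borel" for b
    using int by auto
  have "(\<integral>x. (\<Prod>b\<in>Basis. f b (x \<bullet> b)) \<partial>lborel)
      = (\<integral>g. (\<Prod>b\<in>Basis. f b ((\<Sum>b'\<in>Basis. g b' *\<^sub>R b') \<bullet> b)) \<partial>(\<Pi>\<^sub>M b\<in>Basis. lborel))"
    by (subst lborel_eq) (simp add: integral_distr)
  also have "\<dots> = (\<integral>g. (\<Prod>b\<in>Basis. f b (g b)) \<partial>(\<Pi>\<^sub>M b\<in>Basis. lborel))"
    by (intro Bochner_Integration.integral_cong prod.cong refl)
       (simp add: inner_sum_left inner_Basis if_distrib cong: if_cong)
  also have "\<dots> = (\<Prod>b\<in>Basis. \<integral>u. f b u \<partial>lborel)"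
    by (intro product_sigma_finite.product_integral_prod int)
       (auto simp: product_sigma_finite_def sigma_finite_lborel)
  finally show ?thesis .
qed

lemma integral_lborel_vec_prod:
  fixes f :: "'n::finite \<Rightarrow> real \<Rightarrow> real"
  assumes "\<And>i. integrable lborel (f i)"
  shows "(\<integral>v. (\<Prod>i\<in>UNIV. f i (v $ i)) \<partial>(lborel :: (real^'n) measure)) = (\<Prod>i\<in>UNIV. \<integral>u. f i u \<partial>lborel)"
proof -
  define g where "g b = f (THE i. axis i 1 = b)" for b :: "real^'n"
  have g_axis: "g (axis i 1) = f i" for i
    unfolding g_def by (rule arg_cong[where f = f]) (auto simp: axis_eq_axis)
  have "(\<Prod>i\<in>UNIV. f i (v $ i)) = (\<Prod>b\<in>Basis. g b (v \<bullet> b))" for v :: "real^'n"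
    by (simp add: Basis_vec_eq_range_axis prod.reindex[OF inj_axis_1] g_axis cart_eq_inner_axis)
  moreover have "(\<Prod>i\<in>UNIV. \<integral>u. f i u \<partial>lborel) = (\<Prod>b\<in>Basis. \<integral>u. g b u \<partial>lborel)"
    by (simp add: Basis_vec_eq_range_axis prod.reindex[OF inj_axis_1] g_axis)
  moreover have "integrable lborel (g b)" if "b \<in> Basis" for b
    using that assms by (auto simp: Basis_vec_eq_range_axis g_axis)
  ultimately show ?thesis
    by (simp add: integral_lborel_prod_Basis)
qed

lemma unit_cube_eq_cbox: "(unit_cube :: (real^'n::finite) set) = cbox 0 1"
  by (auto simp: unit_cube_def mem_box_cart)

lemma sets_lborel_unit_cube[measurable]: "(unit_cube :: (real^'n::finite) set) \<in> sets lborel"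
  by (simp add: unit_cube_eq_cbox)

lemma borel_measurable_vec_nth_compose[measurable (raw)]:
  "f \<in> borel_measurable M \<Longrightarrow> (\<lambda>x. (f x :: real^'n) $ i) \<in> borel_measurable M"
  using measurable_compose[OF _ borel_measurable_nth] .

lemma indicator_unit_cube:
  "indicator unit_cube v = (\<Prod>i\<in>UNIV. indicator {0..1} (v $ i) :: real)"
  by (simp add: unit_cube_def indicator_def prod.If_cases)

lemma set_integrableI_bounded:
  fixes f :: "'a::euclidean_space \<Rightarrow> real"
  assumes "A \<in> sets lborel" "emeasure lborel A < \<infinity>" "set_borel_measurable lborel A f"
    and "\<And>x. x \<in> A \<Longrightarrow> \<bar>f x\<bar> \<le> B"
  shows "set_integrable lborel A f"
proof -
  have "integrable lborel (\<lambda>x. indicator A x *\<^sub>R (indicator A x *\<^sub>R f x))"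
    using assms unfolding set_borel_measurable_def
    by (intro integrableI_bounded_set_indicator[where B = B]) (auto simp: indicator_def)
  moreover have "(\<lambda>x. indicator A x *\<^sub>R (indicator A x *\<^sub>R f x)) = (\<lambda>x. indicator A x *\<^sub>R f x)"
    by (auto simp: fun_eq_iff indicator_def)
  ultimately show ?thesis
    unfolding set_integrable_def by simp
qed

lemma set_integrable_Icc_bounded:
  fixes f :: "real \<Rightarrow> real"
  assumes "f \<in> borel_measurable borel" "\<And>u. u \<in> {a..b} \<Longrightarrow> \<bar>f u\<bar> \<le> B"
  shows "set_integrable lborel {a..b} f"
  using assms by (intro set_integrableI_bounded) (auto simp: set_borel_measurable_def emeasure_lborel_Icc_eq)

lemma set_integrable_unit_cube_bounded:
  fixes f :: "real^'n::finite \<Rightarrow> real"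
  assumes "set_borel_measurable lborel unit_cube f" "\<And>x. x \<in> unit_cube \<Longrightarrow> \<bar>f x\<bar> \<le> B"
  shows "set_integrable lborel unit_cube f"
proof (rule set_integrableI_bounded[OF _ _ assms])
  show "emeasure lborel (unit_cube :: (real^'n) set) < \<infinity>"
    unfolding unit_cube_eq_cbox by (rule emeasure_lborel_cbox_finite)
qed measurable

lemma set_integral_unit_cube_prod:
  fixes G :: "'n::finite \<Rightarrow> real \<Rightarrow> real"
  assumes "\<And>i. set_integrable lborel {0..1} (G i)"
  shows "(LINT v:unit_cube|lborel. \<Prod>i\<in>UNIV. G i (v $ i)) = (\<Prod>i\<in>UNIV. LINT u:{0..1}|lborel. G i u)"
  using assms unfolding set_lebesgue_integral_def set_integrable_def
  by (simp add: indicator_unit_cube prod.distrib integral_lborel_vec_prod[symmetric])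

lemma set_integral_unit_cube_one: "(LINT v:(unit_cube :: (real^'n::finite) set)|lborel. 1) = (1 :: real)"
  using set_integral_unit_cube_prod[of "\<lambda>_ _. 1"] set_integrable_Icc_bounded[of "\<lambda>_. 1" 0 1 1]
  by (simp add: set_integral_const)

lemma set_integrable_sum:
  fixes f :: "'i \<Rightarrow> 'a \<Rightarrow> real"
  assumes "\<And>i. i \<in> I \<Longrightarrow> set_integrable M A (f i)"
  shows "set_integrable M A (\<lambda>x. \<Sum>i\<in>I. f i x)"
  using assms unfolding set_integrable_def by (simp add: sum_distrib_left)

lemma set_integral_sum:
  fixes f :: "'i \<Rightarrow> 'a \<Rightarrow> real"
  assumes "\<And>i. i \<in> I \<Longrightarrow> set_integrable M A (f i)"
  shows "(LINT x:A|M. \<Sum>i\<in>I. f i x) = (\<Sum>i\<in>I. LINT x:A|M. f i x)"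
  using assms unfolding set_integrable_def set_lebesgue_integral_def
  by (simp add: sum_distrib_left integral_sum)

lemma set_borel_measurable_unit_cube_mult:
  fixes f g :: "real^'n::finite \<Rightarrow> real"
  assumes "set_borel_measurable lborel unit_cube f" "set_borel_measurable lborel unit_cube g"
  shows "set_borel_measurable lborel unit_cube (\<lambda>x. f x * g x)"
proof -
  have "(\<lambda>x. indicator unit_cube x *\<^sub>R (f x * g x))
      = (\<lambda>x. (indicator unit_cube x *\<^sub>R f x) * (indicator unit_cube x *\<^sub>R g x))"
    by (auto simp: fun_eq_iff indicator_def)
  then show ?thesis
    using assms unfolding set_borel_measurable_def by simp
qed

lemma set_integrable_unit_cube_mult:
  fixes f g :: "real^'n::finite \<Rightarrow> real"
  assumes "set_borel_measurable lborel unit_cube f" "set_borel_measurable lborel unit_cube g"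
    and "\<And>x. x \<in> unit_cube \<Longrightarrow> \<bar>f x\<bar> \<le> B" "\<And>x. x \<in> unit_cube \<Longrightarrow> \<bar>g x\<bar> \<le> C"
  shows "set_integrable lborel unit_cube (\<lambda>x. f x * g x)"
proof (rule set_integrable_unit_cube_bounded[where B = "B * C"])
  show "set_borel_measurable lborel unit_cube (\<lambda>x. f x * g x)"
    using assms(1,2) by (rule set_borel_measurable_unit_cube_mult)
  fix x :: "real^'n" assume "x \<in> unit_cube"
  then show "\<bar>f x * g x\<bar> \<le> B * C"
    using assms(3,4) unfolding abs_mult by (intro mult_mono) (auto intro: order.trans[OF abs_ge_zero])
qed

lemma L2_inner_self_bounds:
  fixes f :: "real^'n::finite \<Rightarrow> real"
  assumes f: "set_borel_measurable lborel unit_cube f" and B: "\<And>x. x \<in> unit_cube \<Longrightarrow> \<bar>f x\<bar> \<le> B"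
  shows "0 \<le> L2_inner f f" and "L2_inner f f \<le> B\<^sup>2"
proof -
  show "0 \<le> L2_inner f f"
    unfolding L2_inner_def set_lebesgue_integral_def by (rule Bochner_Integration.integral_nonneg) simp
  have "L2_inner f f \<le> (LINT x:(unit_cube :: (real^'n) set)|lborel. B\<^sup>2 * 1)"
    unfolding L2_inner_def
  proof (rule set_integral_mono)
    show "set_integrable lborel unit_cube (\<lambda>x. f x * f x)"
      by (rule set_integrable_unit_cube_mult[OF f f B B])
    show "set_integrable lborel (unit_cube :: (real^'n) set) (\<lambda>x. B\<^sup>2 * 1)"
      by (intro set_integrable_unit_cube_bounded[where B = "B\<^sup>2"]) (auto simp: set_borel_measurable_def)
    fix x :: "real^'n" assume "x \<in> unit_cube"
    then have "\<bar>f x\<bar> \<le> \<bar>B\<bar>"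
      using B by fastforce
    then have "(f x)\<^sup>2 \<le> B\<^sup>2"
      by (simp add: abs_le_square_iff)
    then show "f x * f x \<le> B\<^sup>2 * 1"
      by (simp add: power2_eq_square)
  qed
  also have "(LINT x:(unit_cube :: (real^'n) set)|lborel. B\<^sup>2 * 1) = B\<^sup>2"
    by (simp only: set_integral_mult_right set_integral_unit_cube_one)
  finally show "L2_inner f f \<le> B\<^sup>2" .
qed

section \<open>Additive expansions in a centered orthonormal system\<close>

definition basis_index :: "nat \<Rightarrow> ('p \<times> nat) option set" where
  "basis_index J = insert None (Some ` (UNIV \<times> {..<J}))"

definition basis_fun :: "('p \<Rightarrow> nat \<Rightarrow> real \<Rightarrow> real) \<Rightarrow> ('p \<times> nat) option \<Rightarrow> real^'p \<Rightarrow> real" where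
  "basis_fun psi \<iota> v = (case \<iota> of None \<Rightarrow> 1 | Some (k, j) \<Rightarrow> psi k j (v $ k))"

definition basis_coef :: "real \<Rightarrow> ('p \<Rightarrow> nat \<Rightarrow> real) \<Rightarrow> ('p \<times> nat) option \<Rightarrow> real" where
  "basis_coef a c \<iota> = (case \<iota> of None \<Rightarrow> a | Some (k, j) \<Rightarrow> c k j)"

lemma finite_basis_index[simp]: "finite (basis_index J :: ('p::finite \<times> nat) option set)"
  by (simp add: basis_index_def)

lemma sum_basis_index:
  fixes g :: "('p::finite \<times> nat) option \<Rightarrow> real"
  shows "(\<Sum>\<iota>\<in>basis_index J. g \<iota>) = g None + (\<Sum>k\<in>UNIV. \<Sum>j<J. g (Some (k, j)))"
  by (simp add: basis_index_def sum.reindex sum.cartesian_product)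

lemma trunc_fun_eq_sum_basis:
  "trunc_fun psi J a c v = (\<Sum>\<iota>\<in>basis_index J. basis_coef a c \<iota> * basis_fun psi \<iota> v)"
  by (simp add: sum_basis_index trunc_fun_def basis_coef_def basis_fun_def)

lemma trunc_fun_diff:
  "trunc_fun psi J a c x - trunc_fun psi J a' c' x = trunc_fun psi J (a - a') (\<lambda>k j. c k j - c' k j) x"
  by (simp add: trunc_fun_def algebra_simps sum_subtractf)

lemma kernel_t_eq_trunc_fun: "kernel_t psi J u = trunc_fun psi J 1 (\<lambda>k j. psi k j (u $ k))"
  by (simp add: fun_eq_iff kernel_t_def trunc_fun_def)

lemma trunc_fun_in_basis_span: "trunc_fun psi J a c \<in> basis_span psi J"
  by (auto simp: basis_span_def)

locale centered_ons =
  fixes psi :: "'p::finite \<Rightarrow> nat \<Rightarrow> real \<Rightarrow> real" and Mpsi :: real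
  assumes Mpsi_ge_1: "Mpsi \<ge> 1"
    and psi_measurable[measurable]: "psi k j \<in> borel_measurable borel"
    and psi_bounded: "u \<in> {0..1} \<Longrightarrow> \<bar>psi k j u\<bar> \<le> Mpsi"
    and psi_centered: "(LINT u:{0..1}|lborel. psi k j u) = 0"
    and psi_orthonormal: "(LINT u:{0..1}|lborel. psi k j u * psi k j' u) = (if j = j' then 1 else 0)"
begin

lemma psi_bounded_cube: "x \<in> unit_cube \<Longrightarrow> \<bar>psi k j (x $ k)\<bar> \<le> Mpsi"
  by (simp add: psi_bounded unit_cube_def)

lemma set_integrable_psi_factor:
  "set_integrable lborel {0..1} (\<lambda>u. (if i = k then psi k j u else 1) * (if i = k' then psi k' j' u else 1))"
proof (rule set_integrable_Icc_bounded[where B = "Mpsi * Mpsi"])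
  fix u :: real assume "u \<in> {0..1}"
  then have "\<bar>if i = k then psi k j u else 1\<bar> \<le> Mpsi" "\<bar>if i = k' then psi k' j' u else 1\<bar> \<le> Mpsi"
    using psi_bounded Mpsi_ge_1 by auto
  then show "\<bar>(if i = k then psi k j u else 1) * (if i = k' then psi k' j' u else 1)\<bar> \<le> Mpsi * Mpsi"
    unfolding abs_mult by (intro mult_mono) auto
qed simp

lemma set_integral_unit_cube_psi: "(LINT v:unit_cube|lborel. psi k j (v $ k)) = 0"
proof -
  have "(LINT v:unit_cube|lborel. psi k j (v $ k))
      = (LINT v:unit_cube|lborel. \<Prod>i\<in>UNIV. if i = k then psi k j (v $ i) else 1)"
    by simp
  also have "\<dots> = (\<Prod>i\<in>UNIV. LINT u:{0..1}|lborel. if i = k then psi k j u else 1)"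
    by (intro set_integral_unit_cube_prod set_integrable_Icc_bounded[where B = Mpsi])
       (use psi_bounded Mpsi_ge_1 in auto)
  also have "\<dots> = 0"
    by (intro prod_zero bexI[of _ k]) (auto simp: psi_centered)
  finally show ?thesis .
qed

lemma set_integral_unit_cube_psi_psi:
  "(LINT v:unit_cube|lborel. psi k j (v $ k) * psi k' j' (v $ k')) = (if k = k' \<and> j = j' then 1 else 0)"
proof -
  have "(LINT v:unit_cube|lborel. psi k j (v $ k) * psi k' j' (v $ k'))
      = (LINT v:unit_cube|lborel. \<Prod>i\<in>UNIV. (if i = k then psi k j (v $ i) else 1) * (if i = k' then psi k' j' (v $ i) else 1))"
    by (simp add: prod.distrib)
  also have "\<dots> = (\<Prod>i\<in>UNIV. LINT u:{0..1}|lborel. (if i = k then psi k j u else 1) * (if i = k' then psi k' j' u else 1))"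
    by (rule set_integral_unit_cube_prod) (rule set_integrable_psi_factor)
  also have "\<dots> = (if k = k' \<and> j = j' then 1 else 0)"
  proof (cases "k = k'")
    case True
    have "(\<Prod>i\<in>UNIV. LINT u:{0..1}|lborel. (if i = k then psi k j u else 1) * (if i = k' then psi k' j' u else 1))
        = (\<Prod>i\<in>UNIV. if i = k then LINT u:{0..1}|lborel. psi k j u * psi k j' u else 1)"
      using True by (intro prod.cong) (auto simp: set_integral_const)
    then show ?thesis
      using True by (simp add: psi_orthonormal)
  next
    case False
    then show ?thesis
      by (intro trans[OF prod_zero] bexI[of _ k]) (auto simp: psi_centered)
  qed
  finally show ?thesis .
qed

lemma basis_fun_measurable[measurable]: "basis_fun psi \<iota> \<in> borel_measurable borel"
  unfolding basis_fun_def[abs_def] by (cases \<iota>) auto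

lemma basis_fun_bounded: "v \<in> unit_cube \<Longrightarrow> \<bar>basis_fun psi \<iota> v\<bar> \<le> Mpsi"
  using Mpsi_ge_1 psi_bounded_cube by (cases \<iota>) (auto simp: basis_fun_def)

lemma basis_fun_orthonormal:
  "(LINT v:unit_cube|lborel. basis_fun psi \<iota> v * basis_fun psi \<iota>' v) = (if \<iota> = \<iota>' then 1 else 0)"
  by (cases \<iota>; cases \<iota>')
     (auto simp: basis_fun_def set_integral_unit_cube_one set_integral_unit_cube_psi
        set_integral_unit_cube_psi_psi mult.commute[of _ 1] split: if_splits)

lemma L2_inner_trunc_fun:
  "L2_inner (trunc_fun psi J a c) (trunc_fun psi J a' c') = a * a' + (\<Sum>k\<in>UNIV. \<Sum>j<J. c k j * c' k j)"
proof -
  have int: "set_integrable lborel unit_cube (\<lambda>v. basis_fun psi \<iota> v * basis_fun psi \<iota>' v)" for \<iota> \<iota>'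
  proof (rule set_integrable_unit_cube_bounded[where B = "Mpsi * Mpsi"])
    fix v :: "real^'p" assume "v \<in> unit_cube"
    then show "\<bar>basis_fun psi \<iota> v * basis_fun psi \<iota>' v\<bar> \<le> Mpsi * Mpsi"
      unfolding abs_mult using basis_fun_bounded Mpsi_ge_1 by (intro mult_mono) auto
  qed (simp add: set_borel_measurable_def)
  have "L2_inner (trunc_fun psi J a c) (trunc_fun psi J a' c')
     = (LINT v:unit_cube|lborel. \<Sum>\<iota>\<in>basis_index J. \<Sum>\<iota>'\<in>basis_index J.
          (basis_coef a c \<iota> * basis_coef a' c' \<iota>') * (basis_fun psi \<iota> v * basis_fun psi \<iota>' v))"
    unfolding L2_inner_def trunc_fun_eq_sum_basis[of psi] sum_product
    by (simp add: algebra_simps)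
  also have "\<dots> = (\<Sum>\<iota>\<in>basis_index J. \<Sum>\<iota>'\<in>basis_index J.
          (basis_coef a c \<iota> * basis_coef a' c' \<iota>') * (LINT v:unit_cube|lborel. basis_fun psi \<iota> v * basis_fun psi \<iota>' v))"
    using int by (simp add: set_integral_sum set_integrable_sum)
  also have "\<dots> = (\<Sum>\<iota>\<in>basis_index J. basis_coef a c \<iota> * basis_coef a' c' \<iota>)"
    by (simp add: basis_fun_orthonormal if_distrib cong: if_cong)
  finally show ?thesis
    by (simp add: sum_basis_index basis_coef_def)
qed

lemma trunc_fun_measurable[measurable]: "trunc_fun psi J a c \<in> borel_measurable borel"
  unfolding trunc_fun_def[abs_def] by measurable

lemma abs_trunc_fun_le:
  assumes "x \<in> unit_cube"
  shows "\<bar>trunc_fun psi J a c x\<bar> \<le> \<bar>a\<bar> + Mpsi * (\<Sum>k\<in>UNIV. \<Sum>j<J. \<bar>c k j\<bar>)"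
proof -
  have "\<bar>trunc_fun psi J a c x\<bar> \<le> \<bar>a\<bar> + (\<Sum>k\<in>UNIV. \<Sum>j<J. \<bar>c k j\<bar> * \<bar>psi k j (x $ k)\<bar>)"
    unfolding trunc_fun_def abs_mult[symmetric]
    by (rule order.trans[OF abs_triangle_ineq add_left_mono]
        order.trans[OF sum_abs sum_mono] sum_abs)+
  also have "\<dots> \<le> \<bar>a\<bar> + (\<Sum>k\<in>UNIV. \<Sum>j<J. \<bar>c k j\<bar> * Mpsi)"
    using psi_bounded_cube[OF assms] by (intro add_left_mono sum_mono mult_left_mono) auto
  finally show ?thesis
    by (simp add: sum_distrib_left mult.commute)
qed

lemma abs_trunc_fun_le_l1:
  assumes "x \<in> unit_cube" "\<bar>a\<bar> + (\<Sum>k\<in>UNIV. \<Sum>j<J. \<bar>c k j\<bar>) \<le> R"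
  shows "\<bar>trunc_fun psi J a c x\<bar> \<le> Mpsi * R"
proof -
  have "\<bar>a\<bar> + Mpsi * (\<Sum>k\<in>UNIV. \<Sum>j<J. \<bar>c k j\<bar>) \<le> Mpsi * (\<bar>a\<bar> + (\<Sum>k\<in>UNIV. \<Sum>j<J. \<bar>c k j\<bar>))"
    using Mpsi_ge_1 by (simp add: distrib_left mult_le_cancel_right1)
  also have "\<dots> \<le> Mpsi * R"
    using assms(2) Mpsi_ge_1 by (intro mult_left_mono) auto
  finally show ?thesis
    using abs_trunc_fun_le[OF assms(1), of J a c] by linarith
qed

end

locale ons_expansion = centered_ons psi Mpsi
  for psi :: "'p::finite \<Rightarrow> nat \<Rightarrow> real \<Rightarrow> real" and Mpsi :: real +
  fixes q :: "real^'p \<Rightarrow> real" and alpha_s R :: real and theta_s :: "'p \<Rightarrow> nat \<Rightarrow> real"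
  assumes q_expansion: "q x = alpha_s + (\<Sum>k\<in>UNIV. \<Sum>j. theta_s k j * psi k j (x $ k))"
    and theta_s_summable: "summable (\<lambda>j. \<bar>theta_s k j\<bar>)"
    and theta_s_l1: "\<bar>alpha_s\<bar> + (\<Sum>k\<in>UNIV. \<Sum>j. \<bar>theta_s k j\<bar>) \<le> R"
begin

lemma summable_abs_expansion_term:
  assumes "x \<in> unit_cube"
  shows "summable (\<lambda>j. \<bar>theta_s k j * psi k j (x $ k)\<bar>)"
    and "(\<Sum>j. \<bar>theta_s k j * psi k j (x $ k)\<bar>) \<le> Mpsi * (\<Sum>j. \<bar>theta_s k j\<bar>)"
proof -
  have le: "\<bar>theta_s k j * psi k j (x $ k)\<bar> \<le> Mpsi * \<bar>theta_s k j\<bar>" for j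
    using psi_bounded_cube[OF assms] unfolding abs_mult
    by (metis abs_ge_zero mult.commute mult_left_mono)
  have summable: "summable (\<lambda>j. Mpsi * \<bar>theta_s k j\<bar>)"
    using theta_s_summable by (rule summable_mult)
  show "summable (\<lambda>j. \<bar>theta_s k j * psi k j (x $ k)\<bar>)"
    by (rule summable_comparison_test[OF _ summable]) (use le in auto)
  then show "(\<Sum>j. \<bar>theta_s k j * psi k j (x $ k)\<bar>) \<le> Mpsi * (\<Sum>j. \<bar>theta_s k j\<bar>)"
    using suminf_le[OF le _ summable] suminf_mult[OF theta_s_summable] by simp
qed

lemma abs_q_le:
  assumes "x \<in> unit_cube"
  shows "\<bar>q x\<bar> \<le> Mpsi * R"
proof -
  have "\<bar>\<Sum>j. theta_s k j * psi k j (x $ k)\<bar> \<le> (\<Sum>j. \<bar>theta_s k j * psi k j (x $ k)\<bar>)" for k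
    by (rule summable_rabs[OF summable_abs_expansion_term(1)[OF assms]])
  then have "\<bar>q x\<bar> \<le> \<bar>alpha_s\<bar> + (\<Sum>k\<in>UNIV. \<Sum>j. \<bar>theta_s k j * psi k j (x $ k)\<bar>)"
    unfolding q_expansion[of x]
    by (rule order.trans[OF abs_triangle_ineq add_left_mono[OF order.trans[OF sum_abs sum_mono]]])
  also have "\<dots> \<le> \<bar>alpha_s\<bar> + (\<Sum>k\<in>UNIV. Mpsi * (\<Sum>j. \<bar>theta_s k j\<bar>))"
    by (intro add_left_mono sum_mono summable_abs_expansion_term(2)[OF assms])
  also have "\<dots> \<le> Mpsi * (\<bar>alpha_s\<bar> + (\<Sum>k\<in>UNIV. \<Sum>j. \<bar>theta_s k j\<bar>))"
    using Mpsi_ge_1 by (simp add: distrib_left sum_distrib_left mult_le_cancel_right1)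
  also have "\<dots> \<le> Mpsi * R"
    using theta_s_l1 Mpsi_ge_1 by (intro mult_left_mono) auto
  finally show ?thesis .
qed

text \<open>Off the cube the expansion need not converge, so only the restriction of q to the cube is
  measurable, as a pointwise limit of partial sums.\<close>
lemma set_borel_measurable_q: "set_borel_measurable lborel unit_cube q"
  unfolding set_borel_measurable_def
proof (rule borel_measurable_LIMSEQ_real)
  fix x :: "real^'p"
  show "(\<lambda>n. indicator unit_cube x *\<^sub>R (alpha_s + (\<Sum>k\<in>UNIV. \<Sum>j<n. theta_s k j * psi k j (x $ k))))
        \<longlonglongrightarrow> indicator unit_cube x *\<^sub>R q x"
  proof (cases "x \<in> unit_cube")
    case True
    have "(\<lambda>n. \<Sum>j<n. theta_s k j * psi k j (x $ k)) \<longlonglongrightarrow> (\<Sum>j. theta_s k j * psi k j (x $ k))" for k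
      by (rule summable_LIMSEQ[OF summable_rabs_cancel[OF summable_abs_expansion_term(1)[OF True]]])
    then have "(\<lambda>n. alpha_s + (\<Sum>k\<in>UNIV. \<Sum>j<n. theta_s k j * psi k j (x $ k))) \<longlonglongrightarrow> q x"
      unfolding q_expansion[of x] by (intro tendsto_add tendsto_const tendsto_sum)
    then show ?thesis
      using True by simp
  qed simp
qed measurable

end

locale ons_projection = ons_expansion psi Mpsi q alpha_s R theta_s
  for psi :: "'p::finite \<Rightarrow> nat \<Rightarrow> real \<Rightarrow> real" and Mpsi q alpha_s R theta_s +
  fixes J :: nat and ac :: real and cc :: "'p \<Rightarrow> nat \<Rightarrow> real" and checkq :: "real^'p \<Rightarrow> real"
  assumes checkq_eq: "checkq = trunc_fun psi J ac cc"
    and proj_orth: "g \<in> basis_span psi J \<Longrightarrow> L2_inner (\<lambda>x. q x - checkq x) g = 0"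
begin

lemma checkq_measurable[measurable]: "checkq \<in> borel_measurable borel"
  by (simp add: checkq_eq)

lemma trunc_fun_minus_checkq:
  "(\<lambda>v. trunc_fun psi J a c v - checkq v) = trunc_fun psi J (a - ac) (\<lambda>k j. c k j - cc k j)"
  by (simp add: fun_eq_iff checkq_eq trunc_fun_diff)

lemma set_borel_measurable_q_minus_checkq: "set_borel_measurable lborel unit_cube (\<lambda>v. q v - checkq v)"
  using set_borel_measurable_q unfolding set_borel_measurable_def
  by (simp add: right_diff_distrib borel_measurable_diff)

lemma bounded_q_minus_checkq:
  obtains B where "\<And>x. x \<in> unit_cube \<Longrightarrow> \<bar>q x - checkq x\<bar> \<le> B"
proof
  fix x :: "real^'p" assume "x \<in> unit_cube"
  then show "\<bar>q x - checkq x\<bar> \<le> Mpsi * R + (\<bar>ac\<bar> + Mpsi * (\<Sum>k\<in>UNIV. \<Sum>j<J. \<bar>cc k j\<bar>))"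
    using abs_q_le abs_trunc_fun_le[of x J ac cc] unfolding checkq_eq by fastforce
qed

lemma bounded_trunc_fun_minus_checkq:
  obtains B where "\<And>a (c :: 'p \<Rightarrow> nat \<Rightarrow> real) x. \<bar>a\<bar> + (\<Sum>k\<in>UNIV. \<Sum>j<J. \<bar>c k j\<bar>) \<le> R \<Longrightarrow> x \<in> unit_cube \<Longrightarrow>
    \<bar>trunc_fun psi J a c x - checkq x\<bar> \<le> B"
proof
  fix a and c :: "'p \<Rightarrow> nat \<Rightarrow> real" and x :: "real^'p" assume "\<bar>a\<bar> + (\<Sum>k\<in>UNIV. \<Sum>j<J. \<bar>c k j\<bar>) \<le> R" "x \<in> unit_cube"
  then show "\<bar>trunc_fun psi J a c x - checkq x\<bar> \<le> Mpsi * R + (\<bar>ac\<bar> + Mpsi * (\<Sum>k\<in>UNIV. \<Sum>j<J. \<bar>cc k j\<bar>))"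
    using abs_trunc_fun_le_l1 abs_trunc_fun_le[of x J ac cc] unfolding checkq_eq by fastforce
qed

lemma L2_inner_trunc_fun_minus_checkq:
  "L2_inner (\<lambda>v. trunc_fun psi J a c v - checkq v) (\<lambda>v. trunc_fun psi J a c v - checkq v)
    = (a - ac)\<^sup>2 + (\<Sum>k\<in>UNIV. \<Sum>j<J. (c k j - cc k j)\<^sup>2)"
  by (simp add: trunc_fun_minus_checkq L2_inner_trunc_fun power2_eq_square)

lemma L2_inner_kernel:
  "L2_inner (\<lambda>v. trunc_fun psi J a c v - q v) (\<lambda>v. s * kernel_t psi J x v)
     = s * (trunc_fun psi J a c x - checkq x)"
proof -
  define \<kappa> where "\<kappa> = trunc_fun psi J 1 (\<lambda>k j. psi k j (x $ k))"
  have bounded_trunc_fun: "\<exists>B. \<forall>v\<in>unit_cube. \<bar>trunc_fun psi J a' c' v\<bar> \<le> B" for a' c'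
    using abs_trunc_fun_le by blast
  obtain B\<kappa> where B\<kappa>: "\<And>v. v \<in> unit_cube \<Longrightarrow> \<bar>\<kappa> v\<bar> \<le> B\<kappa>"
    using bounded_trunc_fun unfolding \<kappa>_def by blast
  obtain Bh where Bh: "\<And>v. v \<in> unit_cube \<Longrightarrow> \<bar>trunc_fun psi J a c v - checkq v\<bar> \<le> Bh"
    using bounded_trunc_fun[of "a - ac" "\<lambda>k j. c k j - cc k j"] by (auto simp: checkq_eq trunc_fun_diff)
  obtain Be where Be: "\<And>v. v \<in> unit_cube \<Longrightarrow> \<bar>q v - checkq v\<bar> \<le> Be"
    using bounded_q_minus_checkq by blast
  have "set_integrable lborel unit_cube (\<lambda>v. (trunc_fun psi J a c v - checkq v) * \<kappa> v)"
    using Bh B\<kappa> by (intro set_integrable_unit_cube_mult) (auto simp: set_borel_measurable_def \<kappa>_def)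
  moreover have "set_integrable lborel unit_cube (\<lambda>v. (q v - checkq v) * \<kappa> v)"
    using Be B\<kappa> set_borel_measurable_q_minus_checkq
    by (intro set_integrable_unit_cube_mult) (auto simp: set_borel_measurable_def \<kappa>_def)
  ultimately have "L2_inner (\<lambda>v. trunc_fun psi J a c v - q v) \<kappa>
      = L2_inner (\<lambda>v. trunc_fun psi J a c v - checkq v) \<kappa> - L2_inner (\<lambda>v. q v - checkq v) \<kappa>"
    unfolding L2_inner_def by (simp add: left_diff_distrib flip: set_integral_diff(2))
  also have "L2_inner (\<lambda>v. q v - checkq v) \<kappa> = 0"
    unfolding \<kappa>_def by (intro proj_orth trunc_fun_in_basis_span)
  also have "L2_inner (\<lambda>v. trunc_fun psi J a c v - checkq v) \<kappa>
      = trunc_fun psi J (a - ac) (\<lambda>k j. c k j - cc k j) x"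
    unfolding trunc_fun_minus_checkq \<kappa>_def L2_inner_trunc_fun by (simp add: trunc_fun_def)
  also have "\<dots> = trunc_fun psi J a c x - checkq x"
    by (simp add: checkq_eq trunc_fun_diff)
  finally show ?thesis
    by (simp add: L2_inner_def kernel_t_eq_trunc_fun \<kappa>_def mult.left_commute)
qed

end

section \<open>Conditioning on independent observations\<close>

lemma AE_distributed_in_support:
  assumes X: "distributed M N X f" and A: "{x \<in> space N. x \<in> A} \<in> sets N"
    and zero: "\<And>x. x \<in> space N \<Longrightarrow> x \<notin> A \<Longrightarrow> f x = 0"
  shows "AE \<omega> in M. X \<omega> \<in> A"
proof -
  have "AE x in density N f. x \<in> A"
  proof (subst AE_density[OF distributed_borel_measurable[OF X]], intro AE_I2 impI)
    fix x assume "x \<in> space N" "0 < f x"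
    then show "x \<in> A"
      using zero[of x] by (cases "x \<in> A") auto
  qed
  then have "AE x in distr M N X. x \<in> A"
    unfolding distributed_distr_eq_density[OF X] .
  then show ?thesis
    using A by (simp add: AE_distr_iff[OF distributed_measurable[OF X]])
qed

lemma (in prob_space) integral_indep_var_le:
  fixes \<Phi> :: "'b \<times> 'b \<Rightarrow> real" and H :: "'b \<Rightarrow> real"
  assumes indep: "indep_var S D T Z"
    and \<Phi>_measurable: "\<Phi> \<in> borel_measurable (S \<Otimes>\<^sub>M T)"
    and \<Phi>_integrable: "integrable M (\<lambda>\<omega>. \<Phi> (D \<omega>, Z \<omega>))"
    and H_measurable: "H \<in> borel_measurable S" and H_integrable: "integrable M (\<lambda>\<omega>. H (D \<omega>))"
    and P: "Measurable.pred S P" "AE \<omega> in M. P (D \<omega>)"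
    and le: "\<And>d. d \<in> space S \<Longrightarrow> P d \<Longrightarrow> (\<integral>\<omega>. \<Phi> (d, Z \<omega>) \<partial>M) \<le> H d"
  shows "(\<integral>\<omega>. \<Phi> (D \<omega>, Z \<omega>) \<partial>M) \<le> (\<integral>\<omega>. H (D \<omega>) \<partial>M)"
proof -
  have D[measurable]: "D \<in> measurable M S" and Z[measurable]: "Z \<in> measurable M T"
    using indep by (auto dest: indep_var_rv1 indep_var_rv2)
  note [measurable] = \<Phi>_measurable H_measurable P(1)
  have joint: "distr M S D \<Otimes>\<^sub>M distr M T Z = distr M (S \<Otimes>\<^sub>M T) (\<lambda>\<omega>. (D \<omega>, Z \<omega>))"
    using indep unfolding indep_var_distribution_eq by blast
  interpret DZ: pair_prob_space "distr M S D" "distr M T Z"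
    by (intro pair_prob_space.intro pair_sigma_finite.intro prob_space_distr
        prob_space_imp_sigma_finite D Z)
  have \<Phi>_integrable_pair: "integrable (distr M S D \<Otimes>\<^sub>M distr M T Z) \<Phi>"
    unfolding joint using \<Phi>_integrable by (simp add: integrable_distr_eq)
  have "(\<integral>\<omega>. \<Phi> (D \<omega>, Z \<omega>) \<partial>M) = (\<integral>d. (\<integral>z. \<Phi> (d, z) \<partial>distr M T Z) \<partial>distr M S D)"
    using DZ.integral_fst'[OF \<Phi>_integrable_pair] unfolding joint by (simp add: integral_distr)
  also have "\<dots> \<le> (\<integral>d. H d \<partial>distr M S D)"
  proof (rule integral_mono_AE)
    show "integrable (distr M S D) (\<lambda>d. \<integral>z. \<Phi> (d, z) \<partial>distr M T Z)"
      by (rule DZ.integrable_fst'[OF \<Phi>_integrable_pair])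
    show "integrable (distr M S D) H"
      using H_integrable by (simp add: integrable_distr_eq)
    have "AE d in distr M S D. P d"
      using P(2) by (simp add: AE_distr_iff)
    then show "AE d in distr M S D. (\<integral>z. \<Phi> (d, z) \<partial>distr M T Z) \<le> H d"
    proof (rule AE_mp[OF _ AE_I2], intro impI)
      fix d assume "d \<in> space (distr M S D)" "P d"
      then show "(\<integral>z. \<Phi> (d, z) \<partial>distr M T Z) \<le> H d"
        using le[of d] measurable_Pair2[OF \<Phi>_measurable, of d] by (simp add: integral_distr)
    qed
  qed
  also have "\<dots> = (\<integral>\<omega>. H (D \<omega>) \<partial>M)"
    by (simp add: integral_distr)
  finally show ?thesis .
qed

lemma (in prob_space) integral_indep_vars_le:
  fixes Z :: "'i \<Rightarrow> 'a \<Rightarrow> 'b" and \<Phi> :: "('i \<Rightarrow> 'b) \<Rightarrow> 'b \<Rightarrow> real" and H :: "('i \<Rightarrow> 'b) \<Rightarrow> real"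
  assumes indep: "indep_vars (\<lambda>_. N) Z I" and I: "P \<subseteq> I" "i \<in> I" "i \<notin> P"
    and \<Phi>_measurable: "(\<lambda>p. \<Phi> (fst p) (snd p)) \<in> borel_measurable ((\<Pi>\<^sub>M j\<in>P. N) \<Otimes>\<^sub>M N)"
    and \<Phi>_integrable: "integrable M (\<lambda>\<omega>. \<Phi> (\<lambda>j\<in>P. Z j \<omega>) (Z i \<omega>))"
    and H_measurable: "H \<in> borel_measurable (\<Pi>\<^sub>M j\<in>P. N)"
    and H_integrable: "integrable M (\<lambda>\<omega>. H (\<lambda>j\<in>P. Z j \<omega>))"
    and Q: "Measurable.pred (\<Pi>\<^sub>M j\<in>P. N) Q" "AE \<omega> in M. Q (\<lambda>j\<in>P. Z j \<omega>)"
    and le: "\<And>d. d \<in> space (\<Pi>\<^sub>M j\<in>P. N) \<Longrightarrow> Q d \<Longrightarrow> (\<integral>\<omega>. \<Phi> d (Z i \<omega>) \<partial>M) \<le> H d"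
  shows "(\<integral>\<omega>. \<Phi> (\<lambda>j\<in>P. Z j \<omega>) (Z i \<omega>) \<partial>M) \<le> (\<integral>\<omega>. H (\<lambda>j\<in>P. Z j \<omega>) \<partial>M)"
proof -
  have "indep_var (\<Pi>\<^sub>M j\<in>P. N) (\<lambda>\<omega>. \<lambda>j\<in>P. Z j \<omega>) (\<Pi>\<^sub>M j\<in>{i}. N) (\<lambda>\<omega>. \<lambda>j\<in>{i}. Z j \<omega>)"
    using I by (intro indep_var_restrict[OF indep]) auto
  moreover have "(\<lambda>p. (fst p, snd p i)) \<in> measurable ((\<Pi>\<^sub>M j\<in>P. N) \<Otimes>\<^sub>M (\<Pi>\<^sub>M j\<in>{i}. N)) ((\<Pi>\<^sub>M j\<in>P. N) \<Otimes>\<^sub>M N)"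
    by measurable
  from measurable_compose[OF this \<Phi>_measurable]
  have "(\<lambda>p. \<Phi> (fst p) (snd p i)) \<in> borel_measurable ((\<Pi>\<^sub>M j\<in>P. N) \<Otimes>\<^sub>M (\<Pi>\<^sub>M j\<in>{i}. N))"
    by simp
  ultimately have "(\<integral>\<omega>. \<Phi> (fst (\<lambda>j\<in>P. Z j \<omega>, \<lambda>j\<in>{i}. Z j \<omega>)) (snd (\<lambda>j\<in>P. Z j \<omega>, \<lambda>j\<in>{i}. Z j \<omega>) i) \<partial>M)
      \<le> (\<integral>\<omega>. H (\<lambda>j\<in>P. Z j \<omega>) \<partial>M)"
  proof (rule integral_indep_var_le[where P = Q, OF _ _ _ H_measurable H_integrable Q])
    show "integrable M (\<lambda>\<omega>. \<Phi> (fst (\<lambda>j\<in>P. Z j \<omega>, \<lambda>j\<in>{i}. Z j \<omega>)) (snd (\<lambda>j\<in>P. Z j \<omega>, \<lambda>j\<in>{i}. Z j \<omega>) i))"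
      using \<Phi>_integrable by (simp only: fst_conv snd_conv restrict_apply' singletonI)
    fix d assume "d \<in> space (\<Pi>\<^sub>M j\<in>P. N)" "Q d"
    then show "(\<integral>\<omega>. \<Phi> (fst (d, \<lambda>j\<in>{i}. Z j \<omega>)) (snd (d, \<lambda>j\<in>{i}. Z j \<omega>) i) \<partial>M) \<le> H d"
      using le by (simp only: fst_conv snd_conv restrict_apply' singletonI)
  qed
  then show ?thesis
    by (simp only: fst_conv snd_conv restrict_apply' singletonI)
qed

section \<open>The quantile drift\<close>

lemma set_integral_Iic_diff_bounds:
  fixes g :: "real \<Rightarrow> real"
  assumes int: "integrable lborel g" and bnd: "\<And>y. y \<in> {-B..B} \<Longrightarrow> c1 \<le> g y \<and> g y \<le> c2"
    and uv: "u \<in> {-B..B}" "v \<in> {-B..B}" "v \<le> u"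
  shows "c1 * (u - v) \<le> (LINT y:{..u}|lborel. g y) - (LINT y:{..v}|lborel. g y)"
    and "(LINT y:{..u}|lborel. g y) - (LINT y:{..v}|lborel. g y) \<le> c2 * (u - v)"
proof -
  have g_on: "set_integrable lborel A g" if "A \<in> sets lborel" for A
    unfolding set_integrable_def using that int by (rule integrable_mult_indicator)
  have const_on: "set_integrable lborel {v<..u} (\<lambda>_. c)" for c :: real
    using uv by (intro set_integrableI_bounded[where B = "\<bar>c\<bar>"])
      (auto simp: set_borel_measurable_def)
  have "{..u} = {..v} \<union> {v<..u}"
    using uv by auto
  then have diff: "(LINT y:{..u}|lborel. g y) - (LINT y:{..v}|lborel. g y) = (LINT y:{v<..u}|lborel. g y)"
    by (simp only:) (subst set_integral_Un, auto intro!: g_on)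
  have const: "(LINT y:{v<..u}|lborel. c) = c * (u - v)" for c :: real
    using uv by (simp add: set_integral_const)
  have "y \<in> {v<..u} \<Longrightarrow> y \<in> {-B..B}" for y
    using uv by auto
  then show "c1 * (u - v) \<le> (LINT y:{..u}|lborel. g y) - (LINT y:{..v}|lborel. g y)"
    and "(LINT y:{..u}|lborel. g y) - (LINT y:{..v}|lborel. g y) \<le> c2 * (u - v)"
    unfolding diff const[symmetric] using bnd
    by (auto intro!: set_integral_mono const_on g_on)
qed

lemma set_integral_Iic_diff_eq_mult:
  fixes g :: "real \<Rightarrow> real"
  assumes int: "integrable lborel g" and bnd: "\<And>y. y \<in> {-B..B} \<Longrightarrow> c1 \<le> g y \<and> g y \<le> c2"
    and uv: "u \<in> {-B..B}" "v \<in> {-B..B}"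
  shows "\<exists>w. c1 \<le> w \<and> w \<le> c2 \<and>
           (LINT y:{..u}|lborel. g y) - (LINT y:{..v}|lborel. g y) = w * (u - v)"
proof -
  have ordered: "\<exists>w. c1 \<le> w \<and> w \<le> c2 \<and>
           (LINT y:{..u}|lborel. g y) - (LINT y:{..v}|lborel. g y) = w * (u - v)"
    if uv: "u \<in> {-B..B}" "v \<in> {-B..B}" "v \<le> u" for u v
  proof (cases "u = v")
    case True
    then show ?thesis
      using bnd[OF uv(1)] by auto
  next
    case False
    then have "0 < u - v"
      using uv by simp
    then show ?thesis
      using set_integral_Iic_diff_bounds[OF int bnd uv]
      by (intro exI[of _ "((LINT y:{..u}|lborel. g y) - (LINT y:{..v}|lborel. g y)) / (u - v)"])
         (simp add: field_simps)
  qed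
  show ?thesis
  proof (cases "v \<le> u")
    case True
    then show ?thesis using ordered uv by blast
  next
    case False
    then obtain w where "c1 \<le> w" "w \<le> c2"
        "(LINT y:{..v}|lborel. g y) - (LINT y:{..u}|lborel. g y) = w * (v - u)"
      using ordered[of v u] uv by auto
    then show ?thesis
      by (intro exI[of _ w]) (simp add: algebra_simps)
  qed
qed

lemma neg_two_mult_diff_le:
  fixes W h e m L :: real
  assumes "0 < m" "m \<le> W" "W \<le> L"
  shows "- 2 * W * h * (h - e) \<le> - m * h\<^sup>2 + L\<^sup>2 / m * e\<^sup>2"
proof -
  have "- 2 * W * h * (h - e) = - W * h\<^sup>2 + W * e\<^sup>2 - W * (h - e)\<^sup>2"
    by (simp add: power2_eq_square algebra_simps)
  also have "\<dots> \<le> - m * h\<^sup>2 + L * e\<^sup>2"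
  proof -
    have "m * h\<^sup>2 \<le> W * h\<^sup>2" "W * e\<^sup>2 \<le> L * e\<^sup>2" "0 \<le> W * (h - e)\<^sup>2"
      using assms by (auto intro: mult_right_mono)
    then show ?thesis
      by linarith
  qed
  also have "L * e\<^sup>2 \<le> L\<^sup>2 / m * e\<^sup>2"
    using assms by (intro mult_right_mono) (simp_all add: power2_eq_square field_simps)
  finally show ?thesis
    by simp
qed

locale conditional_density =
  fixes pX :: "real^'p::finite \<Rightarrow> real" and pYX :: "real^'p \<Rightarrow> real \<Rightarrow> real"
  assumes pX_measurable[measurable]: "pX \<in> borel_measurable borel"
    and pX_nonneg: "0 \<le> pX x"
    and pX_zero: "x \<notin> unit_cube \<Longrightarrow> pX x = 0"
    and pYX_measurable: "(\<lambda>(x, y). pYX x y) \<in> borel_measurable borel"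
    and pYX_nonneg: "0 \<le> pYX x y"
    and pYX_integrable: "x \<in> unit_cube \<Longrightarrow> integrable lborel (pYX x)"
    and pYX_integral: "x \<in> unit_cube \<Longrightarrow> (\<integral>y. pYX x y \<partial>lborel) = 1"
begin

lemma pYX_measurable_pair[measurable]:
  "(\<lambda>z. pYX (fst z) (snd z)) \<in> borel_measurable (borel \<Otimes>\<^sub>M borel)"
  using pYX_measurable by (simp add: case_prod_beta' borel_prod)

lemma AE_in_unit_cube:
  assumes "distributed M lborel (\<lambda>\<omega>. (X \<omega>, Y \<omega>)) (\<lambda>(x, y). ennreal (pX x * pYX x y))"
  shows "AE \<omega> in M. X \<omega> \<in> unit_cube"
proof -
  have "unit_cube \<times> UNIV \<in> sets (borel :: ((real^'p) \<times> real) measure)"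
    unfolding borel_prod[symmetric] using sets_lborel_unit_cube by (intro pair_measureI) auto
  then show ?thesis
    using AE_distributed_in_support[OF assms, of "unit_cube \<times> UNIV"] pX_zero by auto
qed

lemma integrable_joint_density_drift:
  fixes f h :: "real^'p \<Rightarrow> real" and tau B :: real
  assumes [measurable]: "f \<in> borel_measurable borel" "h \<in> borel_measurable borel"
    and h_bounded: "\<And>x. x \<in> unit_cube \<Longrightarrow> \<bar>h x\<bar> \<le> B"
    and density_integrable: "integrable lborel (\<lambda>z. pX (fst z) * pYX (fst z) (snd z))"
  shows "integrable lborel (\<lambda>z. pX (fst z) * pYX (fst z) (snd z) *
           ((tau - (if snd z \<le> f (fst z) then 1 else 0)) * h (fst z)))" (is "integrable _ ?F")
proof (rule Bochner_Integration.integrable_bound[OF integrable_mult_left[OF density_integrable]])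
  have "?F \<in> borel_measurable (borel \<Otimes>\<^sub>M borel)"
    by measurable
  then show "?F \<in> borel_measurable lborel"
    by (simp add: borel_prod)
  show "AE z in lborel. norm (?F z) \<le> norm (pX (fst z) * pYX (fst z) (snd z) * ((\<bar>tau\<bar> + 1) * B))"
  proof (rule AE_I2)
    fix z :: "(real^'p) \<times> real"
    show "norm (?F z) \<le> norm (pX (fst z) * pYX (fst z) (snd z) * ((\<bar>tau\<bar> + 1) * B))"
    proof (cases "fst z \<in> unit_cube")
      case True
      have "\<bar>(tau - (if snd z \<le> f (fst z) then 1 else 0)) * h (fst z)\<bar> \<le> (\<bar>tau\<bar> + 1) * B"
        using h_bounded[OF True] unfolding abs_mult by (intro mult_mono) auto
      moreover have "0 \<le> B"
        using h_bounded[OF True] by linarith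
      ultimately show ?thesis
        using pX_nonneg[of "fst z"] pYX_nonneg[of "fst z" "snd z"]
        by (simp add: abs_mult mult_left_mono)
    qed (simp add: pX_zero)
  qed
qed

lemma integral_joint_density_drift:
  fixes f h :: "real^'p \<Rightarrow> real" and tau B :: real
  assumes [measurable]: "f \<in> borel_measurable borel" "h \<in> borel_measurable borel"
    and h_bounded: "\<And>x. x \<in> unit_cube \<Longrightarrow> \<bar>h x\<bar> \<le> B"
    and density_integrable: "integrable lborel (\<lambda>z. pX (fst z) * pYX (fst z) (snd z))"
  shows "set_integrable lborel unit_cube (\<lambda>x. pX x * h x * (tau - (LINT y:{..f x}|lborel. pYX x y)))"
      (is "set_integrable _ _ ?G")
    and "(\<integral>z. pX (fst z) * pYX (fst z) (snd z) *
           ((tau - (if snd z \<le> f (fst z) then 1 else 0)) * h (fst z)) \<partial>lborel)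
         = (LINT x:unit_cube|lborel. pX x * h x * (tau - (LINT y:{..f x}|lborel. pYX x y)))"
proof -
  define F where "F z = pX (fst z) * pYX (fst z) (snd z) *
    ((tau - (if snd z \<le> f (fst z) then 1 else 0)) * h (fst z))" for z :: "(real^'p) \<times> real"
  have pair: "pair_sigma_finite lborel lborel"
    by (simp add: pair_sigma_finite_def sigma_finite_lborel)
  have F_integrable: "integrable (lborel \<Otimes>\<^sub>M lborel) F"
    unfolding lborel_prod F_def using h_bounded density_integrable
    by (rule integrable_joint_density_drift[OF assms(1,2)])
  have inner: "(\<integral>y. F (x, y) \<partial>lborel) = indicator unit_cube x * ?G x" for x
  proof (cases "x \<in> unit_cube")
    case True
    have "(\<integral>y. F (x, y) \<partial>lborel)
        = (\<integral>y. pX x * h x * (tau * pYX x y - indicator {..f x} y * pYX x y) \<partial>lborel)"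
      unfolding F_def by (intro Bochner_Integration.integral_cong) (auto simp: indicator_def algebra_simps)
    also have "\<dots> = pX x * h x * (tau * (\<integral>y. pYX x y \<partial>lborel) - (LINT y:{..f x}|lborel. pYX x y))"
      using pYX_integrable[OF True] integrable_mult_indicator[of "{..f x}" lborel "pYX x"]
      by (simp add: set_lebesgue_integral_def)
    finally show ?thesis
      using True pYX_integral by simp
  qed (simp add: F_def pX_zero)
  have "integrable lborel (\<lambda>x. \<integral>y. F (x, y) \<partial>lborel)"
    by (rule pair_sigma_finite.integrable_fst'[OF pair F_integrable])
  then show "set_integrable lborel unit_cube ?G"
    unfolding set_integrable_def inner by simp
  have "(\<integral>z. F z \<partial>lborel) = (\<integral>x. (\<integral>y. F (x, y) \<partial>lborel) \<partial>lborel)"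
    using pair_sigma_finite.integral_fst'[OF pair F_integrable] unfolding lborel_prod by simp
  also have "\<dots> = (LINT x:unit_cube|lborel. ?G x)"
    unfolding inner set_lebesgue_integral_def by simp
  finally show "(\<integral>z. pX (fst z) * pYX (fst z) (snd z) *
           ((tau - (if snd z \<le> f (fst z) then 1 else 0)) * h (fst z)) \<partial>lborel)
         = (LINT x:unit_cube|lborel. ?G x)"
    unfolding F_def .
qed

end

locale quantile_model =
  ons_projection psi Mpsi q alpha_s R theta_s J ac cc checkq + conditional_density pX pYX
  for psi :: "'p::finite \<Rightarrow> nat \<Rightarrow> real \<Rightarrow> real" and Mpsi q alpha_s R theta_s J ac cc checkq pX pYX +
  fixes tau C1 C2 c1 c2 :: real
  assumes C1_pos: "0 < C1"
    and pX_bounds: "x \<in> unit_cube \<Longrightarrow> C1 \<le> pX x \<and> pX x \<le> C2"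
    and c1_pos: "0 < c1"
    and pYX_bounds: "x \<in> unit_cube \<Longrightarrow> y \<in> {-(Mpsi * R)..Mpsi * R} \<Longrightarrow> c1 \<le> pYX x y \<and> pYX x y \<le> c2"
    and quantile: "x \<in> unit_cube \<Longrightarrow> (LINT y:{..q x}|lborel. pYX x y) = tau"
begin

lemma drift_le_pointwise:
  assumes x: "x \<in> unit_cube" and f: "\<bar>f x\<bar> \<le> Mpsi * R"
  shows "2 * (pX x * (f x - checkq x) * (tau - (LINT y:{..f x}|lborel. pYX x y)))
    \<le> - (c1 * C1) * (f x - checkq x)\<^sup>2 + c2\<^sup>2 * C2\<^sup>2 / (c1 * C1) * (q x - checkq x)\<^sup>2"
proof -
  have bounds: "\<And>y. y \<in> {-(Mpsi * R)..Mpsi * R} \<Longrightarrow> c1 \<le> pYX x y \<and> pYX x y \<le> c2"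
    using pYX_bounds[OF x] .
  have "f x \<in> {-(Mpsi * R)..Mpsi * R}" "q x \<in> {-(Mpsi * R)..Mpsi * R}"
    using f abs_q_le[OF x] by auto
  then obtain w where w: "c1 \<le> w" "w \<le> c2"
    and slope: "(LINT y:{..f x}|lborel. pYX x y) - (LINT y:{..q x}|lborel. pYX x y) = w * (f x - q x)"
    using set_integral_Iic_diff_eq_mult[OF pYX_integrable[OF x] bounds] by blast
  have quantile_slope: "tau - (LINT y:{..f x}|lborel. pYX x y) = - w * (f x - q x)"
    using slope quantile[OF x] by simp
  have "2 * (pX x * (f x - checkq x) * (tau - (LINT y:{..f x}|lborel. pYX x y)))
      = - 2 * (w * pX x) * (f x - checkq x) * ((f x - checkq x) - (q x - checkq x))"
    unfolding quantile_slope by (simp add: algebra_simps)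
  also have "\<dots> \<le> - (c1 * C1) * (f x - checkq x)\<^sup>2 + (c2 * C2)\<^sup>2 / (c1 * C1) * (q x - checkq x)\<^sup>2"
    using pX_bounds[OF x] w c1_pos C1_pos by (intro neg_two_mult_diff_le) (auto intro!: mult_mono)
  finally show ?thesis
    by (simp add: power_mult_distrib)
qed

lemma integral_drift_le:
  assumes l1: "\<bar>a\<bar> + (\<Sum>k\<in>UNIV. \<Sum>j<J. \<bar>c k j\<bar>) \<le> R"
    and density_integrable: "integrable lborel (\<lambda>z. pX (fst z) * pYX (fst z) (snd z))"
  shows "2 * (\<integral>z. pX (fst z) * pYX (fst z) (snd z) *
            ((tau - (if snd z \<le> trunc_fun psi J a c (fst z) then 1 else 0)) *
             (trunc_fun psi J a c (fst z) - checkq (fst z))) \<partial>lborel)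
    \<le> - (c1 * C1) * L2_inner (\<lambda>v. trunc_fun psi J a c v - checkq v) (\<lambda>v. trunc_fun psi J a c v - checkq v)
      + c2\<^sup>2 * C2\<^sup>2 / (c1 * C1) * L2_inner (\<lambda>v. q v - checkq v) (\<lambda>v. q v - checkq v)"
proof -
  define f where "f = trunc_fun psi J a c"
  define h where "h v = f v - checkq v" for v
  define e where "e v = q v - checkq v" for v
  define K where "K = c2\<^sup>2 * C2\<^sup>2 / (c1 * C1)"
  obtain Bh where Bh: "\<And>x. x \<in> unit_cube \<Longrightarrow> \<bar>h x\<bar> \<le> Bh"
    using bounded_trunc_fun_minus_checkq l1 unfolding h_def f_def by metis
  obtain Be where Be: "\<And>x. x \<in> unit_cube \<Longrightarrow> \<bar>e x\<bar> \<le> Be"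
    using bounded_q_minus_checkq unfolding e_def by metis
  have [measurable]: "f \<in> borel_measurable borel" "h \<in> borel_measurable borel"
    unfolding h_def f_def by measurable
  have h_sq: "set_integrable lborel unit_cube (\<lambda>x. h x * h x)"
    using Bh by (intro set_integrable_unit_cube_mult) (auto simp: set_borel_measurable_def)
  have e_sq: "set_integrable lborel unit_cube (\<lambda>x. e x * e x)"
    using Be set_borel_measurable_q_minus_checkq unfolding e_def
    by (intro set_integrable_unit_cube_mult) auto
  note drift = integral_joint_density_drift[where f = f and h = h, OF _ _ Bh density_integrable]
  have "2 * (LINT x:unit_cube|lborel. pX x * h x * (tau - (LINT y:{..f x}|lborel. pYX x y)))
      \<le> (LINT x:unit_cube|lborel. - (c1 * C1) * (h x * h x) + K * (e x * e x))"
    unfolding set_integral_mult_right[symmetric]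
  proof (rule set_integral_mono)
    fix x :: "real^'p" assume x: "x \<in> unit_cube"
    have "\<bar>f x\<bar> \<le> Mpsi * R"
      unfolding f_def by (rule abs_trunc_fun_le_l1[OF x l1])
    from drift_le_pointwise[where f = f, OF x this]
    show "2 * (pX x * h x * (tau - (LINT y:{..f x}|lborel. pYX x y)))
        \<le> - (c1 * C1) * (h x * h x) + K * (e x * e x)"
      unfolding h_def e_def K_def power2_eq_square .
  qed (use drift(1) h_sq e_sq in auto)
  also have "\<dots> = - (c1 * C1) * L2_inner h h + K * L2_inner e e"
    using h_sq e_sq unfolding L2_inner_def by simp
  finally show ?thesis
    using drift(2) unfolding h_def e_def K_def f_def by simp
qed

lemma expected_drift_le_fixed:
  fixes M :: "'a measure" and X :: "'a \<Rightarrow> real^'p" and Y :: "'a \<Rightarrow> real"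
  assumes M: "prob_space M"
    and XY_distributed: "distributed M lborel (\<lambda>\<omega>. (X \<omega>, Y \<omega>)) (\<lambda>(x, y). ennreal (pX x * pYX x y))"
    and l1: "\<bar>a\<bar> + (\<Sum>k\<in>UNIV. \<Sum>j<J. \<bar>c k j\<bar>) \<le> R"
  shows "2 * (\<integral>\<omega>. (tau - (if Y \<omega> \<le> trunc_fun psi J a c (X \<omega>) then 1 else 0)) *
            (trunc_fun psi J a c (X \<omega>) - checkq (X \<omega>)) \<partial>M)
    \<le> - (c1 * C1) * L2_inner (\<lambda>v. trunc_fun psi J a c v - checkq v) (\<lambda>v. trunc_fun psi J a c v - checkq v)
      + c2\<^sup>2 * C2\<^sup>2 / (c1 * C1) * L2_inner (\<lambda>v. q v - checkq v) (\<lambda>v. q v - checkq v)"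
proof -
  interpret prob_space M by (rule M)
  define \<phi> where "\<phi> z = (tau - (if snd z \<le> trunc_fun psi J a c (fst z) then 1 else 0)) *
    (trunc_fun psi J a c (fst z) - checkq (fst z))" for z :: "(real^'p) \<times> real"
  have XY_distributed': "distributed M lborel (\<lambda>\<omega>. (X \<omega>, Y \<omega>))
      (\<lambda>z. ennreal (pX (fst z) * pYX (fst z) (snd z)))"
    using XY_distributed by (simp add: case_prod_beta')
  have "integrable lborel (\<lambda>z. pX (fst z) * pYX (fst z) (snd z))"
    using distributed_integrable[OF XY_distributed', of "\<lambda>_. 1"] pX_nonneg pYX_nonneg by simp
  note drift = integral_drift_le[OF l1 this]
  have "\<phi> \<in> borel_measurable (borel \<Otimes>\<^sub>M borel)"
    unfolding \<phi>_def by measurable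
  then have "(\<integral>z. pX (fst z) * pYX (fst z) (snd z) * \<phi> z \<partial>lborel) = (\<integral>\<omega>. \<phi> (X \<omega>, Y \<omega>) \<partial>M)"
    using pX_nonneg pYX_nonneg by (intro distributed_integral[OF XY_distributed']) (auto simp: borel_prod)
  then show ?thesis
    using drift by (simp add: \<phi>_def)
qed

lemma expected_drift_le:
  fixes M :: "'a measure" and Z :: "'i \<Rightarrow> 'a \<Rightarrow> (real^'p) \<times> real" and I P :: "'i set" and i :: 'i
    and a :: "('i \<Rightarrow> (real^'p) \<times> real) \<Rightarrow> real" and c :: "('i \<Rightarrow> (real^'p) \<times> real) \<Rightarrow> 'p \<Rightarrow> nat \<Rightarrow> real"
    and X :: "'a \<Rightarrow> real^'p" and Y :: "'a \<Rightarrow> real"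
    and ahat :: "'a \<Rightarrow> real" and th :: "'a \<Rightarrow> 'p \<Rightarrow> nat \<Rightarrow> real"
  assumes M: "prob_space M"
    and indep: "prob_space.indep_vars M (\<lambda>_. borel) Z I" and P: "P \<subseteq> I" "i \<in> I" "i \<notin> P"
    and XY: "\<And>\<omega>. Z i \<omega> = (X \<omega>, Y \<omega>)"
    and XY_distributed: "distributed M lborel (\<lambda>\<omega>. (X \<omega>, Y \<omega>)) (\<lambda>(x, y). ennreal (pX x * pYX x y))"
    and a_measurable[measurable]: "a \<in> borel_measurable (\<Pi>\<^sub>M j\<in>P. borel)"
    and c_measurable[measurable]: "\<And>k j. (\<lambda>d. c d k j) \<in> borel_measurable (\<Pi>\<^sub>M j\<in>P. borel)"
    and coef: "\<And>\<omega>. \<omega> \<in> space M \<Longrightarrow> ahat \<omega> = a (\<lambda>j\<in>P. Z j \<omega>) \<and> th \<omega> = c (\<lambda>j\<in>P. Z j \<omega>)"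
    and l1: "\<And>\<omega>. \<omega> \<in> space M \<Longrightarrow> \<bar>ahat \<omega>\<bar> + (\<Sum>k\<in>UNIV. \<Sum>j<J. \<bar>th \<omega> k j\<bar>) \<le> R"
  shows "2 * (\<integral>\<omega>. L2_inner (\<lambda>v. trunc_fun psi J (ahat \<omega>) (th \<omega>) v - q v)
             (\<lambda>v. (tau - (if Y \<omega> \<le> trunc_fun psi J (ahat \<omega>) (th \<omega>) (X \<omega>) then 1 else 0))
                   * kernel_t psi J (X \<omega>) v) \<partial>M)
    \<le> - (c1 * C1) * (\<integral>\<omega>. L2_inner (\<lambda>v. trunc_fun psi J (ahat \<omega>) (th \<omega>) v - checkq v)
                                     (\<lambda>v. trunc_fun psi J (ahat \<omega>) (th \<omega>) v - checkq v) \<partial>M)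
      + c2\<^sup>2 * C2\<^sup>2 / (c1 * C1) * L2_inner (\<lambda>v. q v - checkq v) (\<lambda>v. q v - checkq v)"
proof -
  interpret prob_space M by (rule M)
  define S where "S = (\<Pi>\<^sub>M j\<in>P. (borel :: ((real^'p) \<times> real) measure))"
  define f where "f d = trunc_fun psi J (a d) (c d)" for d
  define \<phi> where "\<phi> d z = (tau - (if snd z \<le> f d (fst z) then 1 else 0)) * (f d (fst z) - checkq (fst z))"
    for d z
  define L where "L d = L2_inner (\<lambda>v. f d v - checkq v) (\<lambda>v. f d v - checkq v)" for d
  define K where "K = c2\<^sup>2 * C2\<^sup>2 / (c1 * C1) * L2_inner (\<lambda>v. q v - checkq v) (\<lambda>v. q v - checkq v)"
  define l1_ball where "l1_ball d \<longleftrightarrow> \<bar>a d\<bar> + (\<Sum>k\<in>UNIV. \<Sum>j<J. \<bar>c d k j\<bar>) \<le> R" for d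
  obtain Bh where Bh: "\<And>d x. l1_ball d \<Longrightarrow> x \<in> unit_cube \<Longrightarrow> \<bar>f d x - checkq x\<bar> \<le> Bh"
    using bounded_trunc_fun_minus_checkq unfolding l1_ball_def f_def by metis
  have l1_past: "l1_ball (\<lambda>j\<in>P. Z j \<omega>)" if "\<omega> \<in> space M" for \<omega>
    using l1[OF that] coef[OF that] by (simp add: l1_ball_def)
  have past_measurable: "(\<lambda>\<omega>. \<lambda>j\<in>P. Z j \<omega>) \<in> measurable M S"
    using indep P unfolding S_def by (auto simp: indep_vars_def intro!: measurable_restrict)
  note [measurable] = past_measurable
  have L_measurable: "L \<in> borel_measurable S"
    unfolding L_def f_def L2_inner_trunc_fun_minus_checkq S_def by measurable
  have L_bounds: "0 \<le> L d" "L d \<le> Bh\<^sup>2" if "l1_ball d" for d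
    using L2_inner_self_bounds[of "\<lambda>v. f d v - checkq v" Bh] Bh[OF that]
    unfolding L_def f_def by (auto simp: set_borel_measurable_def)
  have L_integrable: "integrable M (\<lambda>\<omega>. L (\<lambda>j\<in>P. Z j \<omega>))"
    using L_bounds l1_past L_measurable
    by (intro integrable_const_bound[where B = "Bh\<^sup>2"] AE_I2) auto
  have \<phi>_bounded: "\<bar>\<phi> d z\<bar> \<le> (\<bar>tau\<bar> + 1) * Bh" if "l1_ball d" "fst z \<in> unit_cube" for d z
    unfolding \<phi>_def abs_mult using Bh[OF that] by (intro mult_mono) auto
  have "(\<lambda>p. 2 * \<phi> (fst p) (snd p)) \<in> borel_measurable (S \<Otimes>\<^sub>M (borel \<Otimes>\<^sub>M borel))"
    unfolding \<phi>_def f_def trunc_fun_def S_def by measurable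
  then have \<Phi>_measurable: "(\<lambda>p. 2 * \<phi> (fst p) (snd p)) \<in> borel_measurable (S \<Otimes>\<^sub>M borel)"
    by (simp add: borel_prod)
  have "Z i \<in> measurable M borel"
    using indep P by (auto simp: indep_vars_def)
  from measurable_compose[OF measurable_Pair[OF past_measurable this] \<Phi>_measurable]
  have drift_measurable: "(\<lambda>\<omega>. 2 * \<phi> (\<lambda>j\<in>P. Z j \<omega>) (Z i \<omega>)) \<in> borel_measurable M"
    by simp
  have "(\<integral>\<omega>. 2 * \<phi> (\<lambda>j\<in>P. Z j \<omega>) (Z i \<omega>) \<partial>M) \<le> (\<integral>\<omega>. - (c1 * C1) * L (\<lambda>j\<in>P. Z j \<omega>) + K \<partial>M)"
  proof (rule integral_indep_vars_le[OF indep P, where \<Phi> = "\<lambda>d z. 2 * \<phi> d z" and Q = l1_ball])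
    show "integrable M (\<lambda>\<omega>. 2 * \<phi> (\<lambda>j\<in>P. Z j \<omega>) (Z i \<omega>))"
    proof (rule integrable_const_bound[where B = "2 * ((\<bar>tau\<bar> + 1) * Bh)"])
      show "AE \<omega> in M. norm (2 * \<phi> (\<lambda>j\<in>P. Z j \<omega>) (Z i \<omega>)) \<le> 2 * ((\<bar>tau\<bar> + 1) * Bh)"
        using AE_in_unit_cube[OF XY_distributed] AE_space
      proof eventually_elim
        case (elim \<omega>)
        then show ?case
          using \<phi>_bounded[OF l1_past[OF elim(2)], of "(X \<omega>, Y \<omega>)"] by (simp add: XY)
      qed
    qed (rule drift_measurable)
    show "Measurable.pred (\<Pi>\<^sub>M j\<in>P. borel) l1_ball"
      unfolding l1_ball_def by measurable
    show "AE \<omega> in M. l1_ball (\<lambda>j\<in>P. Z j \<omega>)"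
      using l1_past by (intro AE_I2) auto
    show "integrable M (\<lambda>\<omega>. - (c1 * C1) * L (\<lambda>j\<in>P. Z j \<omega>) + K)"
      using L_integrable by (intro Bochner_Integration.integrable_add integrable_mult_right) auto
    fix d assume "l1_ball d"
    then show "(\<integral>\<omega>. 2 * \<phi> d (Z i \<omega>) \<partial>M) \<le> - (c1 * C1) * L d + K"
      using expected_drift_le_fixed[OF M XY_distributed] unfolding l1_ball_def
      by (simp add: XY \<phi>_def f_def L_def K_def)
  qed (use \<Phi>_measurable L_measurable in \<open>auto simp: S_def\<close>)
  moreover have "(\<integral>\<omega>. L2_inner (\<lambda>v. trunc_fun psi J (ahat \<omega>) (th \<omega>) v - q v)
             (\<lambda>v. (tau - (if Y \<omega> \<le> trunc_fun psi J (ahat \<omega>) (th \<omega>) (X \<omega>) then 1 else 0))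
                   * kernel_t psi J (X \<omega>) v) \<partial>M) = (\<integral>\<omega>. \<phi> (\<lambda>j\<in>P. Z j \<omega>) (Z i \<omega>) \<partial>M)"
    by (intro Bochner_Integration.integral_cong refl) (simp add: L2_inner_kernel coef \<phi>_def f_def XY)
  moreover have "(\<integral>\<omega>. L2_inner (\<lambda>v. trunc_fun psi J (ahat \<omega>) (th \<omega>) v - checkq v)
                                     (\<lambda>v. trunc_fun psi J (ahat \<omega>) (th \<omega>) v - checkq v) \<partial>M)
      = (\<integral>\<omega>. L (\<lambda>j\<in>P. Z j \<omega>) \<partial>M)"
    by (intro Bochner_Integration.integral_cong refl) (simp add: coef L_def f_def)
  ultimately show ?thesis
    using L_integrable by (simp add: K_def prob_space)
qed

end

theorem lemma1:
  fixes M :: "'a measure"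
    and XX :: "nat \<Rightarrow> nat \<Rightarrow> 'a \<Rightarrow> real^'p"
    and YY :: "nat \<Rightarrow> nat \<Rightarrow> 'a \<Rightarrow> real"
    and n :: "nat \<Rightarrow> nat" and t :: nat
    and tau Mpsi R alpha_s C1 C2 c1 c2 gamma :: real
    and psi :: "'p \<Rightarrow> nat \<Rightarrow> real \<Rightarrow> real"
    and theta_s :: "'p \<Rightarrow> nat \<Rightarrow> real"
    and q checkq pX :: "real^'p \<Rightarrow> real"
    and pYX :: "real^'p \<Rightarrow> real \<Rightarrow> real"
    and J :: nat
    and ahat :: "'a \<Rightarrow> real" and th :: "'a \<Rightarrow> 'p \<Rightarrow> nat \<Rightarrow> real"
  assumes M: "prob_space M"
    and t: "t \<ge> 1" and n_pos: "\<forall>s. n s \<ge> 1"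
    and tau: "0 < tau" "tau < 1"
    and Mpsi: "Mpsi \<ge> 1"
    and psi_meas: "\<forall>k j. psi k j \<in> borel_measurable borel"
    and psi_bnd: "\<forall>k j u. u \<in> {0..1} \<longrightarrow> \<bar>psi k j u\<bar> \<le> Mpsi"
    and psi_centered: "\<forall>k j. (LINT u:{0..1}|lborel. psi k j u) = 0"
    and psi_orthonormal: "\<forall>k j j'. (LINT u:{0..1}|lborel. psi k j u * psi k j' u)
                                      = (if j = j' then 1 else 0)"
    and q_expansion: "\<forall>x. q x = alpha_s + (\<Sum>k\<in>UNIV. \<Sum>j. theta_s k j * psi k j (x$k))"
    and theta_s_summable: "\<forall>k. summable (\<lambda>j. \<bar>theta_s k j\<bar>)"
    and theta_s_l1: "\<bar>alpha_s\<bar> + (\<Sum>k\<in>UNIV. \<Sum>j. \<bar>theta_s k j\<bar>) \<le> R"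
    and pX_meas: "pX \<in> borel_measurable borel"
    and pX_nonneg: "\<forall>x. 0 \<le> pX x"
    and pX_zero: "\<forall>x. x \<notin> unit_cube \<longrightarrow> pX x = 0"
    and A1: "C1 > 0" "\<forall>x\<in>unit_cube. C1 \<le> pX x \<and> pX x \<le> C2"
    and pYX_meas: "(\<lambda>(x, y). pYX x y) \<in> borel_measurable borel"
    and pYX_nonneg: "\<forall>x y. 0 \<le> pYX x y"
    and pYX_density: "\<forall>x\<in>unit_cube. integrable lborel (pYX x) \<and> (\<integral>y. pYX x y \<partial>lborel) = 1"
    and A2: "c1 > 0" "\<forall>x\<in>unit_cube. \<forall>y\<in>{-(Mpsi*R)..Mpsi*R}. c1 \<le> pYX x y \<and> pYX x y \<le> c2"
    and data_dist: "\<forall>s i. 1 \<le> s \<longrightarrow> 1 \<le> i \<longrightarrow> i \<le> n s \<longrightarrow>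
          distributed M lborel (\<lambda>\<omega>. (XX s i \<omega>, YY s i \<omega>)) (\<lambda>(x, y). ennreal (pX x * pYX x y))"
    and data_indep: "prob_space.indep_vars M (\<lambda>_. borel) (\<lambda>(s, i) \<omega>. (XX s i \<omega>, YY s i \<omega>))
          {(s, i). 1 \<le> s \<and> 1 \<le> i \<and> i \<le> n s}"
    and quantile: "\<forall>x\<in>unit_cube. (LINT y:{..q x}|lborel. pYX x y) = tau"
    and proj: "is_L2_proj psi J q checkq"
    and theta_past: "\<exists>g0 g.
          g0 \<in> borel_measurable (PiM {(s, i). 1 \<le> s \<and> s < t \<and> 1 \<le> i \<and> i \<le> n s} (\<lambda>_. borel)) \<and>
          (\<forall>k j. (\<lambda>d. g d k j) \<in> borel_measurable
                    (PiM {(s, i). 1 \<le> s \<and> s < t \<and> 1 \<le> i \<and> i \<le> n s} (\<lambda>_. borel))) \<and>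
          (\<forall>\<omega>\<in>space M.
             ahat \<omega> = g0 (\<lambda>(s, i)\<in>{(s, i). 1 \<le> s \<and> s < t \<and> 1 \<le> i \<and> i \<le> n s}. (XX s i \<omega>, YY s i \<omega>)) \<and>
             th \<omega> = g (\<lambda>(s, i)\<in>{(s, i). 1 \<le> s \<and> s < t \<and> 1 \<le> i \<and> i \<le> n s}. (XX s i \<omega>, YY s i \<omega>)))"
    and theta_l1: "\<forall>\<omega>\<in>space M. \<bar>ahat \<omega>\<bar> + (\<Sum>k\<in>UNIV. \<Sum>j<J. \<bar>th \<omega> k j\<bar>) \<le> R"
    and gamma: "gamma > 0"
  shows "2 * gamma * (\<integral>\<omega>. L2_inner (\<lambda>v. trunc_fun psi J (ahat \<omega>) (th \<omega>) v - q v)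
             (\<lambda>v. (tau - (if YY t 1 \<omega> \<le> trunc_fun psi J (ahat \<omega>) (th \<omega>) (XX t 1 \<omega>) then 1 else 0))
                   * kernel_t psi J (XX t 1 \<omega>) v) \<partial>M)
         \<le> - gamma * c1 * C1 * (\<integral>\<omega>. L2_inner (\<lambda>v. trunc_fun psi J (ahat \<omega>) (th \<omega>) v - checkq v)
                                          (\<lambda>v. trunc_fun psi J (ahat \<omega>) (th \<omega>) v - checkq v) \<partial>M)
           + gamma * (c2\<^sup>2 * C2\<^sup>2 / (c1 * C1)) * L2_inner (\<lambda>v. q v - checkq v) (\<lambda>v. q v - checkq v)"
proof -
  obtain ac cc where checkq_eq: "checkq = trunc_fun psi J ac cc"
    and proj_orth: "\<forall>g\<in>basis_span psi J. L2_inner (\<lambda>x. q x - checkq x) g = 0"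
    using proj unfolding is_L2_proj_def basis_span_def by blast
  interpret quantile_model psi Mpsi q alpha_s R theta_s J ac cc checkq pX pYX tau C1 C2 c1 c2
    by unfold_locales (use Mpsi psi_meas psi_bnd psi_centered psi_orthonormal q_expansion
        theta_s_summable theta_s_l1 checkq_eq proj_orth pX_meas pX_nonneg pX_zero pYX_meas
        pYX_nonneg pYX_density A1 A2 quantile in auto)
  define P where "P = {(s, i). 1 \<le> s \<and> s < t \<and> 1 \<le> i \<and> i \<le> n s}"
  define Z where "Z = (\<lambda>(s, i) \<omega>. (XX s i \<omega>, YY s i \<omega>))"
  obtain g0 g where g0: "g0 \<in> borel_measurable (\<Pi>\<^sub>M j\<in>P. borel)"
    and g: "\<forall>k j. (\<lambda>d. g d k j) \<in> borel_measurable (\<Pi>\<^sub>M j\<in>P. borel)"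
    and coef: "\<forall>\<omega>\<in>space M. ahat \<omega> = g0 (\<lambda>j\<in>P. Z j \<omega>) \<and> th \<omega> = g (\<lambda>j\<in>P. Z j \<omega>)"
    using theta_past unfolding P_def Z_def split_beta' by blast
  have "2 * (\<integral>\<omega>. L2_inner (\<lambda>v. trunc_fun psi J (ahat \<omega>) (th \<omega>) v - q v)
             (\<lambda>v. (tau - (if YY t 1 \<omega> \<le> trunc_fun psi J (ahat \<omega>) (th \<omega>) (XX t 1 \<omega>) then 1 else 0))
                   * kernel_t psi J (XX t 1 \<omega>) v) \<partial>M)
    \<le> - (c1 * C1) * (\<integral>\<omega>. L2_inner (\<lambda>v. trunc_fun psi J (ahat \<omega>) (th \<omega>) v - checkq v)
                                     (\<lambda>v. trunc_fun psi J (ahat \<omega>) (th \<omega>) v - checkq v) \<partial>M)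
      + c2\<^sup>2 * C2\<^sup>2 / (c1 * C1) * L2_inner (\<lambda>v. q v - checkq v) (\<lambda>v. q v - checkq v)"
    (is "2 * ?drift \<le> - (c1 * C1) * ?error + ?bias")
    using t n_pos data_dist g0 g coef theta_l1
    by (intro expected_drift_le[OF M data_indep[folded Z_def], where P = P and i = "(t, 1)"])
       (auto simp: P_def Z_def)
  then have "gamma * (2 * ?drift) \<le> gamma * (- (c1 * C1) * ?error + ?bias)"
    using gamma by (intro mult_left_mono) auto
  then show ?thesis
    by (simp add: algebra_simps)
qed

end
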